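(* Let $f_2,f_3,f_4\in\mathbb{R}[x,y]$ be forms of degrees $2,3,4$, and let $t_0\neq0$ be real such that $t_0^2z^4+f_2z^2+f_3z+f_4$ is strictly positive definite. Let $\xi_0,\eta_0\in\mathbb{R}[x,y]$ be forms of degrees $2,3$ with $\eta_0^2=(f_2-t_0\xi_0)(4f_4-\xi_0^2)-f_3^2$, $f_2-t_0\xi_0$ psd and $4f_4-\xi_0^2$ psd. Assume that $\eta_0$ and $h_{t_0}(\xi_0):=3t_0\xi_0^2-2f_2\xi_0-4t_0f_4$ are relatively prime and that $f_3\neq0$. Then there exist $\epsilon>0$ and, for every $t$ with $|t-t_0|<\epsilon$, forms $\xi_t,\eta_t\in\mathbb{R}[x,y]$ of degrees $2,3$ with $(\xi_{t_0},\eta_{t_0})=(\xi_0,\eta_0)$, such that $\eta_t^2+f_3^2=(f_2-t\xi_t)(4f_4-\xi_t^2)$ and both $f_2-t\xi_t$ and $4f_4-\xi_t^2$ are psd.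
   Context: psd: taking only nonnegative values on real points; strictly positive definite: taking positive values at all nonzero real points. *)

theory Defs
  imports Complex_Main "HOL-Computational_Algebra.Polynomial_Factorial"
begin

text \<open>Bivariate real polynomials R[x,y] are represented as real poly poly:
  the outer variable is y, the inner (coefficient) variable is x.
  The coefficient of x^i y^j of p is coeff (coeff p j) i.\<close>

type_synonym bipoly = "real poly poly"

definition eval2 :: "bipoly \<Rightarrow> real \<Rightarrow> real \<Rightarrow> real" where
  "eval2 p x y = poly (poly p [:y:]) x"

definition is_form :: "nat \<Rightarrow> bipoly \<Rightarrow> bool" where
  "is_form d p \<longleftrightarrow> (\<forall>i j. coeff (coeff p j) i \<noteq> 0 \<longrightarrow> i + j = d)"

definition const2 :: "real \<Rightarrow> bipoly" where
  "const2 c = [:[:c:]:]"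

definition psd2 :: "bipoly \<Rightarrow> bool" where
  "psd2 p \<longleftrightarrow> (\<forall>x y. eval2 p x y \<ge> 0)"

end

theory Submission
  imports Defs "HOL-Analysis.Analysis" "HOL-Computational_Algebra.Field_as_Ring"
begin

text \<open>
  Coordinatise triples \<open>(t, \<xi>, \<eta>)\<close> of a scalar, a quadratic and a cubic form by \<open>\<real>\<^sup>8\<close>, and let
  \<open>G(t, \<xi>, \<eta>) = (t, coefficients of \<eta>\<^sup>2 + f\<^sub>3\<^sup>2 - (f\<^sub>2 - t\<xi>)(4f\<^sub>4 - \<xi>\<^sup>2))\<close>, a smooth map
  \<open>\<real>\<^sup>8 \<rightarrow> \<real>\<^sup>8\<close> with \<open>G(t\<^sub>0, \<xi>\<^sub>0, \<eta>\<^sub>0) = (t\<^sub>0, 0)\<close>. On the kernel of its derivative the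
  \<open>t\<close>-component vanishes and \<open>2\<eta>\<^sub>0\<eta>' = \<xi>' h\<^sub>t\<^sub>0(\<xi>\<^sub>0)\<close>; coprimality gives \<open>\<eta>\<^sub>0 | \<xi>'\<close>, so
  \<open>\<xi>' = 0\<close> for degree reasons and then \<open>\<eta>' = 0\<close>. The derivative is thus invertible and
  \<open>G\<close> maps every neighbourhood of \<open>(t\<^sub>0, \<xi>\<^sub>0, \<eta>\<^sub>0)\<close> onto a neighbourhood of \<open>(t\<^sub>0, 0)\<close>.

  For positivity: a common zero of the two psd factors at \<open>t\<^sub>0\<close> would be a common zero
  of \<open>\<eta>\<^sub>0\<close> and \<open>h\<^sub>t\<^sub>0(\<xi>\<^sub>0)\<close>, so their sum is positive on the unit circle, and by compactness
  also for all nearby parameters. Since the product of the factors is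
  \<open>\<eta>\<^sub>t\<^sup>2 + f\<^sub>3\<^sup>2 \<ge> 0\<close>, both factors are then nonnegative.
\<close>

subsection \<open>Bivariate forms\<close>

lemma eval2_expand:
  "eval2 p x y = (\<Sum>j\<le>degree p. \<Sum>i\<le>degree (coeff p j). coeff (coeff p j) i * x^i * y^j)"
  unfolding eval2_def
  by (simp add: poly_altdef[of p] poly_sum poly_altdef[of "coeff p _"] sum_distrib_right mult.assoc)

lemma eval2_simps [simp]:
  "eval2 (p + q) x y = eval2 p x y + eval2 q x y"
  "eval2 (p - q) x y = eval2 p x y - eval2 q x y"
  "eval2 (p * q) x y = eval2 p x y * eval2 q x y"
  "eval2 (p ^ n) x y = eval2 p x y ^ n"
  "eval2 (const2 c) x y = c"
  "eval2 0 x y = 0"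
  by (simp_all add: eval2_def const2_def poly_power)

lemma continuous_on_eval2 [continuous_intros]:
  "continuous_on S g1 \<Longrightarrow> continuous_on S g2 \<Longrightarrow> continuous_on S (\<lambda>z. eval2 p (g1 z) (g2 z))"
  unfolding eval2_expand by (intro continuous_intros)

lemma coeff_coeff_mult:
  "coeff (coeff (p * q) j) i =
     (\<Sum>a\<le>j. \<Sum>b\<le>i. coeff (coeff p a) b * coeff (coeff q (j - a)) (i - b))"
  by (simp add: coeff_mult coeff_sum)

lemma coeff_coeff_const2: "coeff (coeff (const2 c) j) i = (if j = 0 \<and> i = 0 then c else 0)"
  unfolding const2_def by (auto simp: coeff_pCons split: nat.splits)

lemma const2_mult: "const2 (a * b) = const2 a * const2 b"
  unfolding const2_def by simp

lemma const2_0: "const2 0 = 0"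
  unfolding const2_def by simp

lemma const2_numeral: "const2 (numeral n) = numeral n"
  unfolding const2_def by (simp add: numeral_poly)

lemma is_form_const2: "is_form 0 (const2 c)"
  unfolding is_form_def by (simp add: coeff_coeff_const2)

lemma is_form_1: "is_form 0 1"
  using is_form_const2[of 1] by (simp add: const2_def one_pCons)

lemma is_form_numeral: "is_form 0 (numeral n)"
  using is_form_const2[of "numeral n"] by (simp add: const2_numeral)

lemma is_form_add: "is_form d p \<Longrightarrow> is_form d q \<Longrightarrow> is_form d (p + q)"
  unfolding is_form_def by (metis add.right_neutral coeff_add)

lemma is_form_diff: "is_form d p \<Longrightarrow> is_form d q \<Longrightarrow> is_form d (p - q)"
  unfolding is_form_def by (metis diff_zero coeff_diff)

lemma is_form_mult: "is_form d p \<Longrightarrow> is_form e q \<Longrightarrow> n = d + e \<Longrightarrow> is_form n (p * q)"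
  unfolding is_form_def coeff_coeff_mult
proof (intro allI impI)
  fix i j
  assume p: "\<forall>i j. coeff (coeff p j) i \<noteq> 0 \<longrightarrow> i + j = d"
    and q: "\<forall>i j. coeff (coeff q j) i \<noteq> 0 \<longrightarrow> i + j = e" and n: "n = d + e"
    and "(\<Sum>a\<le>j. \<Sum>b\<le>i. coeff (coeff p a) b * coeff (coeff q (j - a)) (i - b)) \<noteq> 0"
  then obtain a b where ab: "a \<le> j" "b \<le> i"
      "coeff (coeff p a) b * coeff (coeff q (j - a)) (i - b) \<noteq> 0"
    by (metis (no_types, lifting) atMost_iff sum.neutral)
  then have "b + a = d" "(i - b) + (j - a) = e" using p q by auto
  then show "i + j = n" using ab n by linarith
qed

lemma is_form_power: "is_form d p \<Longrightarrow> is_form (n * d) (p ^ n)"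
  by (induction n) (auto intro: is_form_mult is_form_1)

lemma is_form_scale: "is_form d p \<Longrightarrow> is_form d (const2 c * p)"
  using is_form_mult[OF is_form_const2] by simp

lemma eval2_form_scale:
  assumes "is_form d p"
  shows "eval2 p (c * x) (c * y) = c ^ d * eval2 p x y"
proof -
  have "coeff (coeff p j) i * (c*x)^i * (c*y)^j = c^d * (coeff (coeff p j) i * x^i * y^j)" for i j
  proof (cases "coeff (coeff p j) i = 0")
    case False
    then have "i + j = d" using assms unfolding is_form_def by auto
    then show ?thesis by (auto simp: power_mult_distrib power_add algebra_simps)
  qed simp
  then show ?thesis unfolding eval2_expand sum_distrib_left by (intro sum.cong refl)
qed

lemma form_eq_0I:
  assumes "is_form d p" "\<And>k. k \<le> d \<Longrightarrow> coeff (coeff p k) (d - k) = 0"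
  shows "p = 0"
proof -
  have "coeff (coeff p j) i = 0" for i j
  proof (rule ccontr)
    assume nz: "coeff (coeff p j) i \<noteq> 0"
    then have "i + j = d" using assms(1) unfolding is_form_def by auto
    then show False using assms(2)[of j] nz by (metis add_diff_cancel_right' le_add2)
  qed
  then show ?thesis by (intro poly_eqI) simp
qed

lemma form_degree_sum:
  assumes "is_form d p" "p \<noteq> 0"
  shows "degree p + degree (lead_coeff p) = d"
proof -
  have "coeff (lead_coeff p) (degree (lead_coeff p)) \<noteq> 0" using assms(2) by simp
  then show ?thesis using assms(1) unfolding is_form_def by fastforce
qed

lemma form_dvd_lower_degree_form:
  assumes "is_form d p" "is_form e q" "d < e" "q \<noteq> 0" "q dvd p"
  shows "p = 0"
proof (rule ccontr)
  assume "p \<noteq> 0"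
  obtain r where r: "p = q * r" using assms(5) by blast
  with \<open>p \<noteq> 0\<close> have "r \<noteq> 0" by auto
  have "degree p = degree q + degree r"
    using r \<open>r \<noteq> 0\<close> assms(4) by (simp add: degree_mult_eq)
  moreover have "degree (lead_coeff p) = degree (lead_coeff q) + degree (lead_coeff r)"
    unfolding r lead_coeff_mult using \<open>r \<noteq> 0\<close> assms(4) by (simp add: degree_mult_eq)
  ultimately show False
    using form_degree_sum[OF assms(1) \<open>p \<noteq> 0\<close>] form_degree_sum[OF assms(2,4)] assms(3) by simp
qed

lemma form_nonzero_if_coprime:
  assumes "is_form d q" "d > 0" "coprime p q"
  shows "p \<noteq> 0"
proof
  assume "p = 0"
  then have "is_unit q" using assms(3) by simp
  then obtain c where c: "q = [:c:]" "is_unit c" unfolding is_unit_poly_iff by blast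
  then obtain a where "c = [:a:]" "is_unit a" unfolding is_unit_poly_iff by blast
  then have "coeff (coeff q 0) 0 \<noteq> 0" using c by auto
  then show False using assms(1,2) unfolding is_form_def by fastforce
qed

lemma poly_poly_eval_inner: "poly (poly p c) x = poly (poly p [:poly c x:]) x"
  by (induction p) auto

text \<open>\<open>[:- [:0, s:], 1:]\<close> is the linear form \<open>y - s x\<close>, and \<open>[:[:0, 1:]:]\<close> is \<open>x\<close>.\<close>

lemma form_zero_imp_y_minus_dvd:
  assumes "is_form d p" "eval2 p u v = 0" "u \<noteq> 0"
  shows "[:- [:0, v / u:], 1:] dvd p"
proof -
  define s where "s = v / u"
  have "eval2 p u v = u ^ d * eval2 p 1 s"
    using eval2_form_scale[OF assms(1), of u 1 s] assms(3) by (simp add: s_def)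
  then have s_root: "eval2 p 1 s = 0" using assms(2,3) by simp
  have "poly (poly p [:0, s:]) x = 0" for x
  proof -
    have "poly (poly p [:0, s:]) x = eval2 p (x * 1) (x * s)"
      unfolding eval2_def by (subst poly_poly_eval_inner) (simp add: mult.commute)
    also have "\<dots> = 0" using eval2_form_scale[OF assms(1), of x 1 s] s_root by simp
    finally show ?thesis .
  qed
  then have "poly p [:0, s:] = 0" using poly_all_0_iff_0 by blast
  then show ?thesis using poly_eq_0_iff_dvd s_def by blast
qed

lemma form_zero_imp_x_dvd:
  assumes "is_form d p" "eval2 p 0 v = 0" "v \<noteq> 0"
  shows "[:[:0, 1:]:] dvd p"
proof -
  have coeff_x0: "coeff (coeff p j) 0 = (if j = d then coeff (coeff p d) 0 else 0)" for j
    using assms(1) unfolding is_form_def by fastforce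
  have "eval2 p 0 v = v ^ d * eval2 p 0 1"
    using eval2_form_scale[OF assms(1), of v 0 1] by simp
  also have "eval2 p 0 1 = (\<Sum>j\<le>degree p. if j = d then coeff (coeff p d) 0 else 0)"
  proof -
    have "(\<Sum>i\<le>n. c i * (if i = 0 then 1 else 0)) = (c 0 :: real)" for n :: nat and c
      by (induction n) auto
    then show ?thesis unfolding eval2_expand coeff_x0[symmetric] by (simp add: power_0_left)
  qed
  also have "\<dots> = coeff (coeff p d) 0"
    by (cases "d \<le> degree p") (auto simp: coeff_eq_0)
  finally have "coeff (coeff p j) 0 = 0" for j
    using assms(2,3) coeff_x0[of j] by (metis mult_eq_0_iff power_not_zero)
  then have "[:- 0, 1:] dvd coeff p n" for n
    unfolding poly_eq_0_iff_dvd[symmetric] poly_0_coeff_0 by simp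
  then show ?thesis by (simp add: const_poly_dvd_iff)
qed

lemma forms_common_zero_imp_not_coprime:
  assumes "is_form d p" "is_form e q" "eval2 p u v = 0" "eval2 q u v = 0" "(u, v) \<noteq> (0, 0)"
  shows "\<not> coprime p q"
proof (cases "u = 0")
  case True
  have "\<not> is_unit [:[:0, 1::real:]:]"
    by (simp add: is_unit_const_poly_iff is_unit_poly_iff)
  moreover have "[:[:0, 1:]:] dvd p" "[:[:0, 1:]:] dvd q"
    using form_zero_imp_x_dvd assms True by auto
  ultimately show ?thesis using not_coprimeI by blast
next
  case False
  have "\<not> is_unit [:- c, 1::real poly:]" for c
    unfolding is_unit_poly_iff by auto
  moreover have "[:- [:0, v / u:], 1:] dvd p" "[:- [:0, v / u:], 1:] dvd q"
    using form_zero_imp_y_minus_dvd assms False by auto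
  ultimately show ?thesis using not_coprimeI by blast
qed

lemma psd2_if_nonneg_on_circle:
  assumes "is_form d p" "\<And>x y. x\<^sup>2 + y\<^sup>2 = 1 \<Longrightarrow> eval2 p x y \<ge> 0"
  shows "psd2 p"
  unfolding psd2_def
proof (intro allI)
  fix x y :: real
  define r where "r = sqrt (x\<^sup>2 + y\<^sup>2)"
  show "eval2 p x y \<ge> 0"
  proof (cases "r = 0")
    case True
    then have "x = 0" "y = 0" unfolding r_def by (auto simp: add_nonneg_eq_0_iff)
    then have "eval2 p x y = 0 ^ d * eval2 p 1 0" using eval2_form_scale[OF assms(1), of 0 1 0] by simp
    then show ?thesis using assms(2)[of 1 0] by simp
  next
    case False
    moreover have "r \<ge> 0" unfolding r_def by simp
    ultimately have r: "r > 0" by simp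
    have "(x / r)\<^sup>2 + (y / r)\<^sup>2 = (x\<^sup>2 + y\<^sup>2) / r\<^sup>2"
      by (simp add: power_divide add_divide_distrib)
    also have "\<dots> = r\<^sup>2 / r\<^sup>2" unfolding r_def by simp
    also have "\<dots> = 1" using r by simp
    finally have "(x / r)\<^sup>2 + (y / r)\<^sup>2 = 1" .
    then have "eval2 p (x / r) (y / r) \<ge> 0" by (rule assms(2))
    moreover have "eval2 p x y = r ^ d * eval2 p (x / r) (y / r)"
      using eval2_form_scale[OF assms(1), of r "x / r" "y / r"] r by simp
    ultimately show ?thesis using r by simp
  qed
qed

lemma nonneg_if_mult_nonneg_add_pos: "(a::real) * b \<ge> 0 \<Longrightarrow> a + b > 0 \<Longrightarrow> a \<ge> 0 \<and> b \<ge> 0"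
  by (smt (verit) mult_pos_neg mult_neg_pos)

lemma psd2_factors_if_sum_pos_on_circle:
  assumes "is_form d p" "is_form e q" "\<And>x y. eval2 p x y * eval2 q x y \<ge> 0"
    and "\<And>x y. x\<^sup>2 + y\<^sup>2 = 1 \<Longrightarrow> eval2 p x y + eval2 q x y > 0"
  shows "psd2 p" "psd2 q"
  using psd2_if_nonneg_on_circle[OF assms(1)] psd2_if_nonneg_on_circle[OF assms(2)]
    nonneg_if_mult_nonneg_add_pos assms(3,4) by blast+

subsection \<open>Coordinates on quadratic and cubic forms\<close>

definition quad_form :: "real \<times> real \<times> real \<Rightarrow> bipoly" where
  "quad_form = (\<lambda>(a, b, c). [:[:0, 0, a:], [:0, b:], [:c:]:])"

definition cubic_form :: "real \<times> real \<times> real \<times> real \<Rightarrow> bipoly" where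
  "cubic_form = (\<lambda>(a, b, c, d). [:[:0, 0, 0, a:], [:0, 0, b:], [:0, c:], [:d:]:])"

definition quad_coords :: "bipoly \<Rightarrow> real \<times> real \<times> real" where
  "quad_coords p = (coeff (coeff p 0) 2, coeff (coeff p 1) 1, coeff (coeff p 2) 0)"

definition cubic_coords :: "bipoly \<Rightarrow> real \<times> real \<times> real \<times> real" where
  "cubic_coords p = (coeff (coeff p 0) 3, coeff (coeff p 1) 2, coeff (coeff p 2) 1, coeff (coeff p 3) 0)"

lemma coeff_coeff_quad_form:
  "coeff (coeff (quad_form v) j) i =
    (if j = 0 \<and> i = 2 then fst v else if j = 1 \<and> i = 1 then fst (snd v)
     else if j = 2 \<and> i = 0 then snd (snd v) else 0)"
  by (cases v) (auto simp: quad_form_def coeff_pCons numeral_2_eq_2 split: nat.splits)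

lemma coeff_coeff_cubic_form:
  "coeff (coeff (cubic_form v) j) i =
    (if j = 0 \<and> i = 3 then fst v else if j = 1 \<and> i = 2 then fst (snd v)
     else if j = 2 \<and> i = 1 then fst (snd (snd v)) else if j = 3 \<and> i = 0 then snd (snd (snd v)) else 0)"
  by (cases v)
    (auto simp: cubic_form_def coeff_pCons numeral_2_eq_2 numeral_3_eq_3 split: nat.splits)

lemma is_form_quad_form: "is_form 2 (quad_form v)"
  by (auto simp: is_form_def coeff_coeff_quad_form split: if_splits)

lemma is_form_cubic_form: "is_form 3 (cubic_form v)"
  by (auto simp: is_form_def coeff_coeff_cubic_form split: if_splits)

lemma quad_form_quad_coords:
  assumes "is_form 2 p"
  shows "quad_form (quad_coords p) = p"
proof (rule poly_eqI)
  fix j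
  show "coeff (quad_form (quad_coords p)) j = coeff p j"
  proof (rule poly_eqI)
    fix i
    have "coeff (coeff p j) i \<noteq> 0 \<Longrightarrow> (j = 0 \<and> i = 2) \<or> (j = 1 \<and> i = 1) \<or> (j = 2 \<and> i = 0)"
      using assms unfolding is_form_def by fastforce
    then show "coeff (coeff (quad_form (quad_coords p)) j) i = coeff (coeff p j) i"
      unfolding coeff_coeff_quad_form quad_coords_def by auto
  qed
qed

lemma cubic_form_cubic_coords:
  assumes "is_form 3 p"
  shows "cubic_form (cubic_coords p) = p"
proof (rule poly_eqI)
  fix j
  show "coeff (cubic_form (cubic_coords p)) j = coeff p j"
  proof (rule poly_eqI)
    fix i
    have "coeff (coeff p j) i \<noteq> 0 \<Longrightarrow>
        (j = 0 \<and> i = 3) \<or> (j = 1 \<and> i = 2) \<or> (j = 2 \<and> i = 1) \<or> (j = 3 \<and> i = 0)"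
      using assms unfolding is_form_def by fastforce
    then show "coeff (coeff (cubic_form (cubic_coords p)) j) i = coeff (coeff p j) i"
      unfolding coeff_coeff_cubic_form cubic_coords_def by auto
  qed
qed

lemma quad_form_eq_0_iff [simp]: "quad_form v = 0 \<longleftrightarrow> v = 0"
proof
  assume "quad_form v = 0"
  then have "coeff (coeff (quad_form v) 0) 2 = 0" "coeff (coeff (quad_form v) 1) 1 = 0"
    "coeff (coeff (quad_form v) 2) 0 = 0" by simp_all
  then show "v = 0" unfolding coeff_coeff_quad_form by (simp add: prod_eq_iff)
qed (simp add: quad_form_def zero_prod_def)

lemma cubic_form_eq_0_iff [simp]: "cubic_form v = 0 \<longleftrightarrow> v = 0"
proof
  assume "cubic_form v = 0"
  then have "coeff (coeff (cubic_form v) 0) 3 = 0" "coeff (coeff (cubic_form v) 1) 2 = 0"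
    "coeff (coeff (cubic_form v) 2) 1 = 0" "coeff (coeff (cubic_form v) 3) 0 = 0" by simp_all
  then show "v = 0" unfolding coeff_coeff_cubic_form by (simp add: prod_eq_iff)
qed (simp add: cubic_form_def zero_prod_def)

lemma eval2_quad_form:
  "eval2 (quad_form v) x y = fst v * x\<^sup>2 + fst (snd v) * x * y + snd (snd v) * y\<^sup>2"
  by (cases v) (simp add: eval2_def quad_form_def algebra_simps power2_eq_square)

subsection \<open>The residual map\<close>

type_synonym param = "real \<times> (real \<times> real \<times> real) \<times> (real \<times> real \<times> real \<times> real)"

definition xi_of :: "param \<Rightarrow> bipoly" where
  "xi_of w = quad_form (fst (snd w))"

definition eta_of :: "param \<Rightarrow> bipoly" where
  "eta_of w = cubic_form (snd (snd w))"

definition quadratic_factor :: "bipoly \<Rightarrow> param \<Rightarrow> bipoly" where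
  "quadratic_factor f2 w = f2 - const2 (fst w) * xi_of w"

definition quartic_factor :: "bipoly \<Rightarrow> param \<Rightarrow> bipoly" where
  "quartic_factor f4 w = const2 4 * f4 - (xi_of w)\<^sup>2"

definition residual :: "bipoly \<Rightarrow> bipoly \<Rightarrow> bipoly \<Rightarrow> param \<Rightarrow> bipoly" where
  "residual f2 f3 f4 w = (eta_of w)\<^sup>2 + f3\<^sup>2 - quadratic_factor f2 w * quartic_factor f4 w"

definition residual_deriv :: "bipoly \<Rightarrow> bipoly \<Rightarrow> param \<Rightarrow> param \<Rightarrow> bipoly" where
  "residual_deriv f2 f4 w h =
     2 * eta_of w * eta_of h + (const2 (fst h) * xi_of w + const2 (fst w) * xi_of h) * quartic_factor f4 w
     + 2 * quadratic_factor f2 w * xi_of w * xi_of h"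

definition sextic_coords :: "bipoly \<Rightarrow> (real \<times> real \<times> real) \<times> (real \<times> real \<times> real \<times> real)" where
  "sextic_coords p = (let c = (\<lambda>k. coeff (coeff p k) (6 - k)) in ((c 0, c 1, c 2), (c 3, c 4, c 5, c 6)))"

text \<open>A sextic form has seven coefficients, so the target of the residual map can be taken to be
  \<open>param\<close> again, as the open mapping argument requires.\<close>

definition residual_map :: "bipoly \<Rightarrow> bipoly \<Rightarrow> bipoly \<Rightarrow> param \<Rightarrow> param" where
  "residual_map f2 f3 f4 w = (fst w, sextic_coords (residual f2 f3 f4 w))"

lemma sextic_coords_eq_0_imp_eq_0:
  assumes "is_form 6 p" "sextic_coords p = 0"
  shows "p = 0"
proof (rule form_eq_0I[OF assms(1)])
  fix k :: nat
  assume "k \<le> 6"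
  then have "k \<in> {0, 1, 2, 3, 4, 5, 6}" by auto
  then show "coeff (coeff p k) (6 - k) = 0"
    using assms(2) unfolding sextic_coords_def Let_def by (auto simp: zero_prod_def)
qed

lemma is_form_quadratic_factor: "is_form 2 f2 \<Longrightarrow> is_form 2 (quadratic_factor f2 w)"
  unfolding quadratic_factor_def xi_of_def by (intro is_form_diff is_form_scale is_form_quad_form)

lemma is_form_quartic_factor: "is_form 4 f4 \<Longrightarrow> is_form 4 (quartic_factor f4 w)"
  unfolding quartic_factor_def xi_of_def
  by (intro is_form_diff is_form_scale is_form_power[OF is_form_quad_form, of 2, simplified])

lemma is_form_residual:
  assumes "is_form 2 f2" "is_form 3 f3" "is_form 4 f4"
  shows "is_form 6 (residual f2 f3 f4 w)"
  unfolding residual_def eta_of_def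
  by (intro is_form_add is_form_diff is_form_power[OF is_form_cubic_form, of 2, simplified]
      is_form_power[OF assms(2), of 2, simplified]
      is_form_mult[OF is_form_quadratic_factor[OF assms(1)] is_form_quartic_factor[OF assms(3)]]) simp

lemma is_form_residual_deriv:
  assumes "is_form 2 f2" "is_form 4 f4"
  shows "is_form 6 (residual_deriv f2 f4 w h)"
proof -
  have "is_form 2 (const2 (fst h) * xi_of w + const2 (fst w) * xi_of h)"
    unfolding xi_of_def by (intro is_form_add is_form_scale is_form_quad_form)
  then have "is_form 6 ((const2 (fst h) * xi_of w + const2 (fst w) * xi_of h) * quartic_factor f4 w)"
    by (rule is_form_mult[OF _ is_form_quartic_factor[OF assms(2)]]) simp
  moreover have "is_form 6 (2 * eta_of w * eta_of h)"
    unfolding eta_of_def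
    by (rule is_form_mult[OF is_form_mult[OF is_form_numeral is_form_cubic_form] is_form_cubic_form]) simp_all
  moreover have "is_form 6 (2 * quadratic_factor f2 w * xi_of w * xi_of h)"
    unfolding xi_of_def
    by (rule is_form_mult[OF is_form_mult[OF is_form_mult[OF is_form_numeral
          is_form_quadratic_factor[OF assms(1)]] is_form_quad_form] is_form_quad_form]) simp_all
  ultimately show ?thesis unfolding residual_deriv_def by (intro is_form_add)
qed

definition has_coeffwise_derivative ::
    "('a::real_normed_vector \<Rightarrow> bipoly) \<Rightarrow> ('a \<Rightarrow> bipoly) \<Rightarrow> 'a \<Rightarrow> bool" where
  "has_coeffwise_derivative M M' w \<longleftrightarrow>
     (\<forall>j i. ((\<lambda>v. coeff (coeff (M v) j) i) has_derivative (\<lambda>h. coeff (coeff (M' h) j) i)) (at w))"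

lemma has_coeffwise_derivative_const: "has_coeffwise_derivative (\<lambda>v. p) (\<lambda>h. 0) w"
  unfolding has_coeffwise_derivative_def by simp

lemma has_coeffwise_derivative_add:
  "has_coeffwise_derivative M M' w \<Longrightarrow> has_coeffwise_derivative N N' w \<Longrightarrow>
   has_coeffwise_derivative (\<lambda>v. M v + N v) (\<lambda>h. M' h + N' h) w"
  unfolding has_coeffwise_derivative_def by (auto intro: has_derivative_add)

lemma has_coeffwise_derivative_diff:
  "has_coeffwise_derivative M M' w \<Longrightarrow> has_coeffwise_derivative N N' w \<Longrightarrow>
   has_coeffwise_derivative (\<lambda>v. M v - N v) (\<lambda>h. M' h - N' h) w"
  unfolding has_coeffwise_derivative_def by (auto intro: has_derivative_diff)

lemma has_coeffwise_derivative_mult: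
  assumes "has_coeffwise_derivative M M' w" "has_coeffwise_derivative N N' w"
  shows "has_coeffwise_derivative (\<lambda>v. M v * N v) (\<lambda>h. M' h * N w + M w * N' h) w"
  unfolding has_coeffwise_derivative_def coeff_coeff_mult coeff_add
proof (intro allI)
  fix j i
  have "((\<lambda>v. \<Sum>a\<le>j. \<Sum>b\<le>i. coeff (coeff (M v) a) b * coeff (coeff (N v) (j - a)) (i - b)) has_derivative
      (\<lambda>h. \<Sum>a\<le>j. \<Sum>b\<le>i. coeff (coeff (M w) a) b * coeff (coeff (N' h) (j - a)) (i - b)
                          + coeff (coeff (M' h) a) b * coeff (coeff (N w) (j - a)) (i - b))) (at w)"
    using assms unfolding has_coeffwise_derivative_def by (intro has_derivative_sum has_derivative_mult) auto
  then show "((\<lambda>v. \<Sum>a\<le>j. \<Sum>b\<le>i. coeff (coeff (M v) a) b * coeff (coeff (N v) (j - a)) (i - b))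
      has_derivative (\<lambda>h. (\<Sum>a\<le>j. \<Sum>b\<le>i. coeff (coeff (M' h) a) b * coeff (coeff (N w) (j - a)) (i - b))
        + (\<Sum>a\<le>j. \<Sum>b\<le>i. coeff (coeff (M w) a) b * coeff (coeff (N' h) (j - a)) (i - b)))) (at w)"
    by (rule has_derivative_eq_rhs) (simp add: sum.distrib algebra_simps)
qed

lemma has_derivative_if_const:
  "(f has_derivative f') F \<Longrightarrow> (g has_derivative g') F \<Longrightarrow>
   ((\<lambda>v. if C then f v else g v) has_derivative (\<lambda>h. if C then f' h else g' h)) F"
  by (cases C) auto

lemma has_coeffwise_derivative_fst:
  "has_coeffwise_derivative (\<lambda>v::param. const2 (fst v)) (\<lambda>h. const2 (fst h)) w"
  unfolding has_coeffwise_derivative_def coeff_coeff_const2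
  by (intro allI has_derivative_if_const derivative_intros)

lemma has_coeffwise_derivative_xi_of: "has_coeffwise_derivative xi_of xi_of w"
  unfolding has_coeffwise_derivative_def xi_of_def coeff_coeff_quad_form
  by (intro allI has_derivative_if_const derivative_intros)

lemma has_coeffwise_derivative_eta_of: "has_coeffwise_derivative eta_of eta_of w"
  unfolding has_coeffwise_derivative_def eta_of_def coeff_coeff_cubic_form
  by (intro allI has_derivative_if_const derivative_intros)

lemma has_coeffwise_derivative_residual:
  "has_coeffwise_derivative (residual f2 f3 f4) (residual_deriv f2 f4 w) w"
proof -
  have "has_coeffwise_derivative (residual f2 f3 f4) (\<lambda>h.
     (eta_of h * eta_of w + eta_of w * eta_of h + (0 * f3 + f3 * 0)) -
     ((0 - (const2 (fst h) * xi_of w + const2 (fst w) * xi_of h)) * quartic_factor f4 w +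
      quadratic_factor f2 w * ((0 * f4 + const2 4 * 0) - (xi_of h * xi_of w + xi_of w * xi_of h)))) w"
    unfolding residual_def[abs_def] quadratic_factor_def quartic_factor_def power2_eq_square
    by (intro has_coeffwise_derivative_add has_coeffwise_derivative_diff has_coeffwise_derivative_mult
        has_coeffwise_derivative_const has_coeffwise_derivative_fst has_coeffwise_derivative_xi_of
        has_coeffwise_derivative_eta_of)
  moreover have "(\<lambda>h.
     (eta_of h * eta_of w + eta_of w * eta_of h + (0 * f3 + f3 * 0)) -
     ((0 - (const2 (fst h) * xi_of w + const2 (fst w) * xi_of h)) * quartic_factor f4 w +
      quadratic_factor f2 w * ((0 * f4 + const2 4 * 0) - (xi_of h * xi_of w + xi_of w * xi_of h))))
    = residual_deriv f2 f4 w"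
    unfolding residual_deriv_def by (rule ext) algebra
  ultimately show ?thesis by simp
qed

lemma residual_map_has_derivative:
  "(residual_map f2 f3 f4 has_derivative (\<lambda>h. (fst h, sextic_coords (residual_deriv f2 f4 w h)))) (at w)"
  using has_coeffwise_derivative_residual[of f2 f3 f4 w]
  unfolding residual_map_def[abs_def] sextic_coords_def Let_def has_coeffwise_derivative_def
  by (intro has_derivative_Pair derivative_intros) auto

subsection \<open>Invertibility of the derivative\<close>

definition h_form :: "bipoly \<Rightarrow> bipoly \<Rightarrow> real \<Rightarrow> bipoly \<Rightarrow> bipoly" where
  "h_form f2 f4 t \<xi> = const2 (3 * t) * \<xi>\<^sup>2 - const2 2 * f2 * \<xi> - const2 (4 * t) * f4"

lemma is_form_h_form:
  assumes "is_form 2 f2" "is_form 4 f4" "is_form 2 \<xi>"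
  shows "is_form 4 (h_form f2 f4 t \<xi>)"
  unfolding h_form_def
  by (intro is_form_diff is_form_scale is_form_power[OF assms(3), of 2, simplified] assms(2)
      is_form_mult[OF is_form_scale[OF assms(1)] assms(3)]) simp

lemma residual_deriv_fst_0:
  assumes "fst h = 0"
  shows "residual_deriv f2 f4 w h = 2 * eta_of w * eta_of h - xi_of h * h_form f2 f4 (fst w) (xi_of w)"
  unfolding residual_deriv_def h_form_def quadratic_factor_def quartic_factor_def assms
    const2_0 const2_mult const2_numeral
  by algebra

lemma residual_deriv_kernel:
  assumes "is_form 2 f2" "is_form 4 f4" "coprime (eta_of w) (h_form f2 f4 (fst w) (xi_of w))"
    and "fst h = 0" "residual_deriv f2 f4 w h = 0"
  shows "h = 0"
proof -
  have "is_form 4 (h_form f2 f4 (fst w) (xi_of w))"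
    using is_form_h_form[OF assms(1,2)] is_form_quad_form unfolding xi_of_def by blast
  then have "eta_of w \<noteq> 0" using form_nonzero_if_coprime assms(3) by auto
  have key: "2 * eta_of w * eta_of h = xi_of h * h_form f2 f4 (fst w) (xi_of w)"
    using assms(4,5) residual_deriv_fst_0 by simp
  then have "eta_of w dvd xi_of h * h_form f2 f4 (fst w) (xi_of w)"
    by (metis dvd_triv_left mult.assoc mult.commute)
  then have "eta_of w dvd xi_of h" using assms(3) coprime_dvd_mult_left_iff by blast
  then have "xi_of h = 0"
    using form_dvd_lower_degree_form[of 2 "xi_of h" 3 "eta_of w"] \<open>eta_of w \<noteq> 0\<close>
      is_form_quad_form is_form_cubic_form unfolding xi_of_def eta_of_def by simp
  with key \<open>eta_of w \<noteq> 0\<close> have "eta_of h = 0" by simp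
  with \<open>xi_of h = 0\<close> assms(4) show "h = 0"
    unfolding xi_of_def eta_of_def by (simp add: prod_eq_iff)
qed

lemma open_mapping_injective_derivative:
  fixes f :: "'a::euclidean_space \<Rightarrow> 'a"
  assumes "continuous_on UNIV f" "(f has_derivative f') (at x)" "inj f'" "\<delta> > 0"
  obtains e where "e > 0" "ball (f x) e \<subseteq> f ` ball x \<delta>"
proof -
  have "bounded_linear f'" using assms(2) has_derivative_bounded_linear by blast
  then have "linear f'" by (rule bounded_linear.linear)
  then have "surj f'" using linear_injective_imp_surjective assms(3) by blast
  have "bounded_linear (inv f')"
    using inj_linear_imp_inv_bounded_linear \<open>bounded_linear f'\<close> assms(3) by blast
  moreover have "f' \<circ> inv f' = id" using \<open>surj f'\<close> by (simp add: comp_def surj_f_inv_f fun_eq_iff)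
  ultimately have "f x \<in> interior (f ` ball x \<delta>)"
    using assms by (intro sussmann_open_mapping[OF open_UNIV]) auto
  then show ?thesis using that unfolding mem_interior by blast
qed

lemma inj_residual_map_deriv:
  assumes "is_form 2 f2" "is_form 4 f4" "coprime (eta_of w) (h_form f2 f4 (fst w) (xi_of w))"
  shows "inj (\<lambda>h. (fst h, sextic_coords (residual_deriv f2 f4 w h)))"
proof -
  have "linear (\<lambda>h. (fst h, sextic_coords (residual_deriv f2 f4 w h)))"
    using residual_map_has_derivative[of f2 0 f4 w] has_derivative_linear by blast
  moreover have "h = 0" if "(fst h, sextic_coords (residual_deriv f2 f4 w h)) = 0" for h
  proof -
    from that have "fst h = 0" "sextic_coords (residual_deriv f2 f4 w h) = 0"
      by (simp_all add: zero_prod_def)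
    then show "h = 0"
      using residual_deriv_kernel[OF assms] sextic_coords_eq_0_imp_eq_0
        is_form_residual_deriv[OF assms(1,2)] by blast
  qed
  ultimately show ?thesis using linear_injective_0 by blast
qed

subsection \<open>Positivity\<close>

lemma psd_factors_sum_pos:
  assumes "is_form 2 f2" "is_form 4 f4" "is_form 2 \<xi>" "is_form 3 \<eta>"
    and eq: "\<eta>\<^sup>2 = (f2 - const2 t * \<xi>) * (const2 4 * f4 - \<xi>\<^sup>2) - f3\<^sup>2"
    and psd: "psd2 (f2 - const2 t * \<xi>)" "psd2 (const2 4 * f4 - \<xi>\<^sup>2)"
    and "coprime \<eta> (h_form f2 f4 t \<xi>)" "(x, y) \<noteq> (0, 0)"
  shows "eval2 (f2 - const2 t * \<xi>) x y + eval2 (const2 4 * f4 - \<xi>\<^sup>2) x y > 0"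
proof (rule ccontr)
  assume "\<not> ?thesis"
  moreover have "eval2 (f2 - const2 t * \<xi>) x y \<ge> 0" "eval2 (const2 4 * f4 - \<xi>\<^sup>2) x y \<ge> 0"
    using psd unfolding psd2_def by blast+
  ultimately have "eval2 (f2 - const2 t * \<xi>) x y = 0" "eval2 (const2 4 * f4 - \<xi>\<^sup>2) x y = 0"
    by linarith+
  then have A: "eval2 f2 x y = t * eval2 \<xi> x y" and B: "4 * eval2 f4 x y = (eval2 \<xi> x y)\<^sup>2"
    by simp_all
  have "(eval2 \<eta> x y)\<^sup>2 + (eval2 f3 x y)\<^sup>2 = 0"
    using arg_cong[OF eq, of "\<lambda>p. eval2 p x y"] A B by simp
  then have "eval2 \<eta> x y = 0" by (simp add: add_nonneg_eq_0_iff)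
  moreover have "eval2 (h_form f2 f4 t \<xi>) x y = 0"
    using A B unfolding h_form_def by (simp add: algebra_simps power2_eq_square)
  ultimately have "\<not> coprime \<eta> (h_form f2 f4 t \<xi>)"
    using forms_common_zero_imp_not_coprime[OF assms(4) is_form_h_form[OF assms(1-3)]] assms(9) by blast
  with assms(8) show False by contradiction
qed

lemma pos_on_compact_persists:
  fixes P :: "'a::metric_space \<times> 'b::topological_space \<Rightarrow> real"
  assumes "continuous_on UNIV P" "compact K" "\<And>u. u \<in> K \<Longrightarrow> P (w0, u) > 0"
  obtains \<delta> where "\<delta> > 0" "\<And>w u. dist w w0 < \<delta> \<Longrightarrow> u \<in> K \<Longrightarrow> P (w, u) > 0"
proof -
  have "open {p. 0 < P p}" using open_Collect_less[OF continuous_on_const assms(1)] .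
  moreover have "{w0} \<times> K \<subseteq> {p. 0 < P p}" using assms(3) by auto
  ultimately obtain X where "w0 \<in> X" "open X" "X \<times> K \<subseteq> {p. 0 < P p}"
    using Elementary_Topology.tube_lemma[OF assms(2)] by metis
  then obtain \<delta> where "\<delta> > 0" "ball w0 \<delta> \<subseteq> X" using open_contains_ball by blast
  with \<open>X \<times> K \<subseteq> {p. 0 < P p}\<close> show ?thesis
    using that by (auto simp: dist_commute subset_iff)
qed

lemma factor_sum_pos_near:
  assumes "\<And>x y. (x, y) \<noteq> (0, 0) \<Longrightarrow>
    eval2 (quadratic_factor f2 w0) x y + eval2 (quartic_factor f4 w0) x y > 0"
  obtains \<delta> where "\<delta> > 0" "\<And>w x y. dist w w0 < \<delta> \<Longrightarrow> x\<^sup>2 + y\<^sup>2 = 1 \<Longrightarrow>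
    eval2 (quadratic_factor f2 w) x y + eval2 (quartic_factor f4 w) x y > 0"
proof -
  define P :: "param \<times> real \<times> real \<Rightarrow> real" where
    "P = (\<lambda>p. eval2 (quadratic_factor f2 (fst p)) (fst (snd p)) (snd (snd p))
              + eval2 (quartic_factor f4 (fst p)) (fst (snd p)) (snd (snd p)))"
  have cont: "continuous_on UNIV P"
    unfolding P_def quadratic_factor_def quartic_factor_def xi_of_def eval2_simps eval2_quad_form
    by (intro continuous_intros)
  have pos: "P (w0, u) > 0" if "u \<in> sphere 0 1" for u
  proof -
    have "u \<noteq> 0" using that by auto
    then have "(fst u, snd u) \<noteq> (0, 0)" by (metis prod.collapse zero_prod_def)
    from assms[OF this] show ?thesis unfolding P_def by simp
  qed
  obtain \<delta> where \<delta>: "\<delta> > 0" "\<And>w u. dist w w0 < \<delta> \<Longrightarrow> u \<in> sphere 0 1 \<Longrightarrow> P (w, u) > 0"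
    using pos_on_compact_persists[OF cont compact_sphere pos] by blast
  show ?thesis
  proof (rule that[OF \<delta>(1)])
    fix w and x y :: real
    assume "dist w w0 < \<delta>" "x\<^sup>2 + y\<^sup>2 = 1"
    then show "eval2 (quadratic_factor f2 w) x y + eval2 (quartic_factor f4 w) x y > 0"
      using \<delta>(2)[of w "(x, y)"] unfolding P_def by (simp add: norm_Pair)
  qed
qed

subsection \<open>The deformation\<close>

definition psd_solution :: "bipoly \<Rightarrow> bipoly \<Rightarrow> bipoly \<Rightarrow> real \<Rightarrow> bipoly \<Rightarrow> bipoly \<Rightarrow> bool" where
  "psd_solution f2 f3 f4 t \<xi> \<eta> \<longleftrightarrow> is_form 2 \<xi> \<and> is_form 3 \<eta> \<and>
     \<eta>\<^sup>2 + f3\<^sup>2 = (f2 - const2 t * \<xi>) * (const2 4 * f4 - \<xi>\<^sup>2) \<and>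
     psd2 (f2 - const2 t * \<xi>) \<and> psd2 (const2 4 * f4 - \<xi>\<^sup>2)"

lemma psd_solution_if_residual_map_eq:
  assumes "is_form 2 f2" "is_form 3 f3" "is_form 4 f4"
    and "residual_map f2 f3 f4 w = (t, 0)"
    and "\<And>x y. x\<^sup>2 + y\<^sup>2 = 1 \<Longrightarrow> eval2 (quadratic_factor f2 w) x y + eval2 (quartic_factor f4 w) x y > 0"
  shows "psd_solution f2 f3 f4 t (xi_of w) (eta_of w)"
proof -
  have t: "fst w = t" and "sextic_coords (residual f2 f3 f4 w) = 0"
    using assms(4) unfolding residual_map_def by simp_all
  then have "residual f2 f3 f4 w = 0"
    using sextic_coords_eq_0_imp_eq_0 is_form_residual[OF assms(1-3)] by blast
  then have eq: "(eta_of w)\<^sup>2 + f3\<^sup>2 = quadratic_factor f2 w * quartic_factor f4 w"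
    unfolding residual_def by simp
  have "eval2 (quadratic_factor f2 w) x y * eval2 (quartic_factor f4 w) x y
      = (eval2 (eta_of w) x y)\<^sup>2 + (eval2 f3 x y)\<^sup>2" for x y
    unfolding eval2_simps(3)[symmetric] eq[symmetric] by simp
  then have "eval2 (quadratic_factor f2 w) x y * eval2 (quartic_factor f4 w) x y \<ge> 0" for x y
    by simp
  then have "psd2 (quadratic_factor f2 w)" "psd2 (quartic_factor f4 w)"
    using psd2_factors_if_sum_pos_on_circle assms(5)
      is_form_quadratic_factor[OF assms(1)] is_form_quartic_factor[OF assms(3)] by blast+
  with eq t show ?thesis
    unfolding psd_solution_def quadratic_factor_def quartic_factor_def xi_of_def eta_of_def
    by (simp add: is_form_quad_form is_form_cubic_form)
qed

lemma choice_through_point: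
  assumes "P x0 y0" "\<And>x. x \<in> A \<Longrightarrow> \<exists>y. P x y"
  obtains f where "f x0 = y0" "\<And>x. x \<in> A \<Longrightarrow> P x (f x)"
proof -
  define f where "f x = (if x = x0 then y0 else SOME y. P x y)" for x
  have "P x (f x)" if "x \<in> A" for x
    using assms(1) someI_ex[OF assms(2)[OF that]] unfolding f_def by auto
  moreover have "f x0 = y0" unfolding f_def by simp
  ultimately show ?thesis using that by blast
qed

lemma psd_solutions_near:
  assumes f: "is_form 2 f2" "is_form 3 f3" "is_form 4 f4"
    and "residual f2 f3 f4 w0 = 0"
    and coprime: "coprime (eta_of w0) (h_form f2 f4 (fst w0) (xi_of w0))"
    and pos0: "\<And>x y. (x, y) \<noteq> (0, 0) \<Longrightarrow>
      eval2 (quadratic_factor f2 w0) x y + eval2 (quartic_factor f4 w0) x y > 0"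
  obtains e where "e > 0"
    "\<And>t. t \<in> {t. \<bar>t - fst w0\<bar> < e} \<Longrightarrow> \<exists>p. psd_solution f2 f3 f4 t (fst p) (snd p)"
proof -
  obtain \<delta> where \<delta>: "\<delta> > 0" "\<And>w x y. dist w w0 < \<delta> \<Longrightarrow> x\<^sup>2 + y\<^sup>2 = 1 \<Longrightarrow>
      eval2 (quadratic_factor f2 w) x y + eval2 (quartic_factor f4 w) x y > 0"
    using factor_sum_pos_near[OF pos0] by blast
  have G0: "residual_map f2 f3 f4 w0 = (fst w0, 0)"
    using assms(4) unfolding residual_map_def sextic_coords_def by (simp add: zero_prod_def)
  have cont: "continuous_on UNIV (residual_map f2 f3 f4)"
    by (intro continuous_at_imp_continuous_on ballI
        has_derivative_continuous[OF residual_map_has_derivative])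
  obtain e where e: "e > 0" "ball (fst w0, 0) e \<subseteq> residual_map f2 f3 f4 ` ball w0 \<delta>"
    using open_mapping_injective_derivative[OF cont residual_map_has_derivative
        inj_residual_map_deriv[OF f(1,3) coprime] \<delta>(1)]
    unfolding G0 by blast
  show ?thesis
  proof (rule that[OF e(1)])
    fix t
    assume "t \<in> {t. \<bar>t - fst w0\<bar> < e}"
    then have "(t, 0) \<in> ball (fst w0, 0) e" by (simp add: dist_Pair_Pair dist_real_def)
    with e(2) have "(t, 0) \<in> residual_map f2 f3 f4 ` ball w0 \<delta>" by (rule subsetD)
    then obtain w where w: "w \<in> ball w0 \<delta>" "(t, 0) = residual_map f2 f3 f4 w" by (rule imageE)
    have "psd_solution f2 f3 f4 t (xi_of w) (eta_of w)"
      by (rule psd_solution_if_residual_map_eq[OF f w(2)[symmetric] \<delta>(2)])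
        (use w(1) in \<open>simp_all add: dist_commute\<close>)
    then show "\<exists>p. psd_solution f2 f3 f4 t (fst p) (snd p)"
      by (intro exI[of _ "(xi_of w, eta_of w)"]) simp
  qed
qed

theorem proposition6p3:
  fixes f2 f3 f4 \<xi>0 \<eta>0 :: bipoly and t0 :: real
  assumes "is_form 2 f2" "is_form 3 f3" "is_form 4 f4"
    and "t0 \<noteq> 0"
    and "\<forall>x y z. (x, y, z) \<noteq> (0, 0, 0) \<longrightarrow>
           t0\<^sup>2 * z ^ 4 + eval2 f2 x y * z\<^sup>2 + eval2 f3 x y * z + eval2 f4 x y > 0"
    and "is_form 2 \<xi>0" "is_form 3 \<eta>0"
    and "\<eta>0\<^sup>2 = (f2 - const2 t0 * \<xi>0) * (const2 4 * f4 - \<xi>0\<^sup>2) - f3\<^sup>2"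
    and "psd2 (f2 - const2 t0 * \<xi>0)" "psd2 (const2 4 * f4 - \<xi>0\<^sup>2)"
    and "coprime \<eta>0 (const2 (3 * t0) * \<xi>0\<^sup>2 - const2 2 * f2 * \<xi>0 - const2 (4 * t0) * f4)"
    and "f3 \<noteq> 0"
  shows "\<exists>\<epsilon>>0. \<exists>\<xi> \<eta> :: real \<Rightarrow> bipoly. \<xi> t0 = \<xi>0 \<and> \<eta> t0 = \<eta>0 \<and>
           (\<forall>t. \<bar>t - t0\<bar> < \<epsilon> \<longrightarrow>
              is_form 2 (\<xi> t) \<and> is_form 3 (\<eta> t) \<and>
              (\<eta> t)\<^sup>2 + f3\<^sup>2 = (f2 - const2 t * \<xi> t) * (const2 4 * f4 - (\<xi> t)\<^sup>2) \<and>
              psd2 (f2 - const2 t * \<xi> t) \<and> psd2 (const2 4 * f4 - (\<xi> t)\<^sup>2))"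
proof -
  define w0 :: param where "w0 = (t0, quad_coords \<xi>0, cubic_coords \<eta>0)"
  have w0: "fst w0 = t0" "xi_of w0 = \<xi>0" "eta_of w0 = \<eta>0"
    unfolding w0_def xi_of_def eta_of_def
    using quad_form_quad_coords[OF assms(6)] cubic_form_cubic_coords[OF assms(7)] by simp_all
  have coprime: "coprime \<eta>0 (h_form f2 f4 t0 \<xi>0)"
    using assms(11) unfolding h_form_def .
  have eq0: "\<eta>0\<^sup>2 + f3\<^sup>2 = (f2 - const2 t0 * \<xi>0) * (const2 4 * f4 - \<xi>0\<^sup>2)"
    unfolding assms(8) by simp
  then have res0: "residual f2 f3 f4 w0 = 0"
    unfolding residual_def quadratic_factor_def quartic_factor_def w0 by simp
  have pos0: "eval2 (quadratic_factor f2 w0) x y + eval2 (quartic_factor f4 w0) x y > 0"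
    if "(x, y) \<noteq> (0, 0)" for x y
    using psd_factors_sum_pos[OF assms(1,3,6,7,8,9,10) coprime that]
    unfolding quadratic_factor_def quartic_factor_def w0 .
  have "coprime (eta_of w0) (h_form f2 f4 (fst w0) (xi_of w0))"
    using coprime unfolding w0 .
  then obtain e where e: "e > 0"
    "\<And>t. t \<in> {t. \<bar>t - t0\<bar> < e} \<Longrightarrow> \<exists>p. psd_solution f2 f3 f4 t (fst p) (snd p)"
    using psd_solutions_near[OF assms(1-3) res0 _ pos0] unfolding w0 by blast
  have "psd_solution f2 f3 f4 t0 (fst (\<xi>0, \<eta>0)) (snd (\<xi>0, \<eta>0))"
    unfolding psd_solution_def using eq0 assms(6,7,9,10) by simp
  from choice_through_point[where P = "\<lambda>t p. psd_solution f2 f3 f4 t (fst p) (snd p)", OF this e(2)]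
  obtain s where s: "s t0 = (\<xi>0, \<eta>0)"
    "\<And>t. t \<in> {t. \<bar>t - t0\<bar> < e} \<Longrightarrow> psd_solution f2 f3 f4 t (fst (s t)) (snd (s t))"
    by blast
  show ?thesis
    by (intro exI[of _ e] conjI exI[of _ "\<lambda>t. fst (s t)"] exI[of _ "\<lambda>t. snd (s t)"] allI impI)
      (use e(1) s in \<open>simp_all add: psd_solution_def\<close>)
qed

end
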